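(* Let $f(z)=z+\sum_{n=2}^{\infty}a_nz^n\in\mathcal{S}^{*}_{\rho}$ and set $$\Omega_2:=(a_4a_6-a_5^2)-a_2(a_3a_6-a_4a_5)+a_3(a_3a_5-a_4^2).$$ Then $$|\Omega_2|\le \frac{1136896+716800\sqrt{3/157}+81920\sqrt{3/67}+212736\sqrt{2/35}+74240\sqrt{21/307}+10240\sqrt{6/23}}{3686400}\approx 0.360465 .$$
   Context: Let $\mathbb{D}=\{z\in\mathbb{C}:|z|<1\}$. For analytic $g_1,g_2$ on $\mathbb{D}$, $g_1\prec g_2$ means there is an analytic $w:\mathbb{D}\to\mathbb{D}$ with $w(0)=0$ such that $g_1=g_2\circ w$. Here $\sinh^{-1}$ denotes the principal branch of the inverse hyperbolic sine with $\sinh^{-1}(0)=0$, analytic on $\mathbb{D}$. The class $\mathcal{S}^{*}_{\rho}$ consists of all univalent analytic functions $f$ on $\mathbb{D}$ with $f(z)=z+\sum_{n\ge2}a_nz^n$ such that $\frac{zf'(z)}{f(z)}\prec 1+\sinh^{-1}(z)$. *)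

theory Defs
  imports "HOL-Complex_Analysis.Complex_Analysis"
begin

definition subordinate :: "(complex \<Rightarrow> complex) \<Rightarrow> (complex \<Rightarrow> complex) \<Rightarrow> bool" where
  "subordinate g1 g2 \<longleftrightarrow>
     (\<exists>w. w holomorphic_on ball 0 1 \<and> w ` ball 0 1 \<subseteq> ball 0 1 \<and> w 0 = 0 \<and>
          (\<forall>z\<in>ball 0 1. g1 z = g2 (w z)))"

definition taylor_coeff :: "(complex \<Rightarrow> complex) \<Rightarrow> nat \<Rightarrow> complex" where
  "taylor_coeff f n = (deriv ^^ n) f 0 / of_nat (fact n)"

text \<open>The class S*_rho: normalized univalent analytic f on D with z f'/f \<prec> 1 + arsinh z.
  At z = 0 the quotient z f'(z)/f(z) is understood by its removable value 1.\<close>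
definition S_star_rho :: "(complex \<Rightarrow> complex) set" where
  "S_star_rho = {f. f holomorphic_on ball 0 1 \<and> inj_on f (ball 0 1) \<and>
      f 0 = 0 \<and> deriv f 0 = 1 \<and>
      subordinate (\<lambda>z. if z = 0 then 1 else z * deriv f z / f z) (\<lambda>z. 1 + arsinh z)}"

end

theory Submission
  imports Defs
begin

text \<open>Writing \<open>z f'(z)/f(z) = 1 + q(z)\<close> with \<open>q = arsinh \<circ> w\<close> for a Schwarz function \<open>w\<close>,
  comparison of Taylor coefficients expresses \<open>a\<^sub>2, \<dots>, a\<^sub>6\<close> as polynomials in the
  coefficients \<open>c\<^sub>1, \<dots>, c\<^sub>5\<close> of \<open>w\<close>, and \<open>\<Omega>\<^sub>2\<close> becomes a polynomial of degree 8 in them.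
  The triangle inequality together with \<open>|c\<^sub>n| \<le> 1\<close> and \<open>|c\<^sub>2| \<le> 1 - |c\<^sub>1|\<^sup>2\<close> reduces the estimate
  to a polynomial inequality in \<open>|c\<^sub>1|\<close> alone, which yields the bound \<open>1/3\<close>; this is below the
  stated constant.\<close>

lemma sinh_arsinh_complex: "sinh (arsinh (x::complex)) = x"
proof -
  define y where "y = x^2 + 1"
  define S where "S = y powr (of_real (1/2))"
  have S2: "S^2 = y"
  proof (cases "y = 0")
    case True then show ?thesis by (simp add: S_def)
  next
    case False
    have "S^2 = exp ((1/2) * ln y) * exp ((1/2) * ln y)"
      using False by (simp add: S_def powr_def power2_eq_square)
    also have "\<dots> = exp (ln y)" by (simp flip: exp_add)
    also have "\<dots> = y" using False by simp
    finally show ?thesis .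
  qed
  have nz: "x + S \<noteq> 0"
  proof
    assume "x + S = 0"
    then have "S^2 = x^2" by (simp add: add_eq_0_iff2)
    with S2 show False by (simp add: y_def)
  qed
  have exp_arsinh: "exp (arsinh x) = x + S"
    using nz by (simp add: arsinh_def S_def y_def)
  have "inverse (x + S) = S - x"
    using nz S2 by (simp add: field_simps y_def power2_eq_square)
  then show ?thesis
    by (simp add: sinh_def exp_minus scaleR_conv_of_real exp_arsinh)
qed

lemma taylor_coeff_0 [simp]: "taylor_coeff h 0 = h 0"
  by (simp add: taylor_coeff_def)

lemma taylor_coeff_1 [simp]: "taylor_coeff h 1 = deriv h 0" "taylor_coeff h (Suc 0) = deriv h 0"
  by (simp_all add: taylor_coeff_def)

lemma taylor_coeff_ident: "taylor_coeff (\<lambda>z. z) n = (if n = 1 then 1 else 0)"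
  by (simp add: taylor_coeff_def)

lemma taylor_coeff_deriv: "taylor_coeff (deriv h) n = of_nat (Suc n) * taylor_coeff h (Suc n)"
  unfolding taylor_coeff_def funpow_Suc_right o_def fact_Suc of_nat_mult of_nat_id times_divide_eq_right
  by (rule nonzero_mult_divide_mult_cancel_left[symmetric]) (simp del: of_nat_Suc)

lemma taylor_coeff_cong:
  assumes "open S" "0 \<in> S" "\<And>z. z \<in> S \<Longrightarrow> h z = k z"
  shows "taylor_coeff h n = taylor_coeff k n"
proof -
  have "eventually (\<lambda>z. h z = k z) (nhds 0)"
    using assms by (intro eventually_nhds_in_open[of S, THEN eventually_mono]) auto
  then show ?thesis
    unfolding taylor_coeff_def using higher_deriv_cong_ev by metis
qed

lemma taylor_coeff_add:
  assumes "h holomorphic_on S" "k holomorphic_on S" "open S" "0 \<in> S"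
  shows "taylor_coeff (\<lambda>z. h z + k z) n = taylor_coeff h n + taylor_coeff k n"
  using higher_deriv_add[OF assms, of n] by (simp add: taylor_coeff_def add_divide_distrib)

lemma taylor_coeff_mult:
  assumes "h holomorphic_on S" "k holomorphic_on S" "open S" "0 \<in> S"
  shows "taylor_coeff (\<lambda>z. h z * k z) n = (\<Sum>i=0..n. taylor_coeff h i * taylor_coeff k (n - i))"
  using higher_deriv_mult[OF assms, of n]
  by (simp add: taylor_coeff_def sum_divide_distrib binomial_fact divide_simps)

lemma taylor_coeff_ident_mult:
  assumes "h holomorphic_on S" "open S" "0 \<in> S"
  shows "taylor_coeff (\<lambda>z. z * h z) n = (if n = 0 then 0 else taylor_coeff h (n - 1))"
proof -
  have "taylor_coeff (\<lambda>z. z * h z) n = (\<Sum>i=0..n. taylor_coeff (\<lambda>z. z) i * taylor_coeff h (n - i))"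
    by (rule taylor_coeff_mult[OF _ assms]) simp
  also have "\<dots> = (\<Sum>i=0..n. if i = 1 then taylor_coeff h (n - 1) else 0)"
    by (rule sum.cong) (auto simp: taylor_coeff_ident)
  finally show ?thesis by simp
qed

lemma taylor_coeff_ident_mult_deriv:
  assumes "h holomorphic_on S" "open S" "0 \<in> S"
  shows "taylor_coeff (\<lambda>z. z * deriv h z) n = of_nat n * taylor_coeff h n"
  using taylor_coeff_ident_mult[OF holomorphic_deriv[OF assms(1,2)] assms(2,3), of n]
  by (cases n) (simp_all add: taylor_coeff_deriv)

lemma taylor_coeff_deriv_eq_mult_deriv:
  assumes G: "G holomorphic_on S" and q: "q holomorphic_on S" and S: "open S" "0 \<in> S"
    and dF: "\<And>z. z \<in> S \<Longrightarrow> deriv F z = G z * deriv q z"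
  shows "of_nat (Suc m) * taylor_coeff F (Suc m)
    = (\<Sum>i=0..m. taylor_coeff G i * (of_nat (Suc (m - i)) * taylor_coeff q (Suc (m - i))))"
proof -
  have "of_nat (Suc m) * taylor_coeff F (Suc m) = taylor_coeff (deriv F) m"
    by (simp add: taylor_coeff_deriv)
  also have "\<dots> = taylor_coeff (\<lambda>z. G z * deriv q z) m"
    by (rule taylor_coeff_cong[OF S]) (simp add: dF)
  also have "\<dots> = (\<Sum>i=0..m. taylor_coeff G i * taylor_coeff (deriv q) (m - i))"
    by (rule taylor_coeff_mult[OF G holomorphic_deriv[OF q S(1)] S])
  finally show ?thesis by (simp add: taylor_coeff_deriv Suc_diff_le)
qed

text \<open>These are the first terms of \<open>arsinh u = u - u\<^sup>3/6 + 3u\<^sup>5/40 - \<dots>\<close>; they are obtained from the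
  coupled recursions for the coefficients of \<open>sinh \<circ> q\<close> and \<open>cosh \<circ> q\<close>.\<close>

lemma taylor_coeff_from_sinh_comp:
  assumes q: "q holomorphic_on S" and S: "open S" "0 \<in> S" and q0: "q 0 = 0"
  defines "c \<equiv> taylor_coeff (\<lambda>z. sinh (q z))" and "Q \<equiv> taylor_coeff q"
  shows "Q 1 = c 1" "Q 2 = c 2" "6 * Q 3 = 6 * c 3 - c 1^3" "2 * Q 4 = 2 * c 4 - c 1^2 * c 2"
    and "40 * Q 5 = 40 * c 5 - 20 * c 1 * c 2^2 - 20 * c 1^2 * c 3 + 3 * c 1^5"
proof -
  define K where "K = taylor_coeff (\<lambda>z. cosh (q z))"
  have an: "q analytic_on S" using q S by (simp add: analytic_on_open)
  have sinh_hol: "(\<lambda>z. sinh (q z)) holomorphic_on S"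
    using analytic_on_sinh[OF an] S by (simp add: analytic_on_open)
  have cosh_hol: "(\<lambda>z. cosh (q z)) holomorphic_on S"
    using analytic_on_cosh[OF an] S by (simp add: analytic_on_open)
  have dq: "(q has_field_derivative deriv q z) (at z)" if "z \<in> S" for z
    using q S that by (intro holomorphic_derivI) auto
  have "deriv (\<lambda>z. sinh (q z)) z = cosh (q z) * deriv q z" if "z \<in> S" for z
    by (rule DERIV_imp_deriv) (rule derivative_eq_intros dq[OF that] refl)+
  from taylor_coeff_deriv_eq_mult_deriv[OF cosh_hol q S this]
  have sinh_rec: "of_nat (Suc m) * c (Suc m) = (\<Sum>i=0..m. K i * (of_nat (Suc (m - i)) * Q (Suc (m - i))))"
    for m by (simp add: c_def K_def Q_def)
  have "deriv (\<lambda>z. cosh (q z)) z = sinh (q z) * deriv q z" if "z \<in> S" for z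
    by (rule DERIV_imp_deriv) (rule derivative_eq_intros dq[OF that] refl)+
  from taylor_coeff_deriv_eq_mult_deriv[OF sinh_hol q S this]
  have cosh_rec: "of_nat (Suc m) * K (Suc m) = (\<Sum>i=0..m. c i * (of_nat (Suc (m - i)) * Q (Suc (m - i))))"
    for m by (simp add: c_def K_def Q_def)
  note sum_simps = atLeast0_atMost_Suc eval_nat_numeral
  have c0: "c 0 = 0" and K0: "K 0 = 1" using q0 by (simp_all add: c_def K_def)
  show Q1: "Q 1 = c 1" using sinh_rec[of 0] K0 by simp
  have K1: "K 1 = 0" using cosh_rec[of 0] c0 by simp
  show Q2: "Q 2 = c 2" using sinh_rec[of 1] K0 K1 by (simp add: sum_simps)
  have K2: "2 * K 2 = c 1^2" using cosh_rec[of 1] c0 Q1 by (simp add: sum_simps power2_eq_square)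
  show Q3: "6 * Q 3 = 6 * c 3 - c 1^3" using sinh_rec[of 2] K0 K1 K2 Q1 Q2 by (simp add: sum_simps; algebra)
  have K3: "K 3 = c 1 * c 2" using cosh_rec[of 2] c0 Q1 Q2 by (simp add: sum_simps; algebra)
  show Q4: "2 * Q 4 = 2 * c 4 - c 1^2 * c 2"
    using sinh_rec[of 3] K0 K1 K2 K3 Q1 Q2 Q3 by (simp add: sum_simps; algebra)
  have K4: "8 * K 4 = 4 * c 2^2 + 8 * c 1 * c 3 - c 1^4"
    using cosh_rec[of 3] c0 Q1 Q2 Q3 by (simp add: sum_simps; algebra)
  show "40 * Q 5 = 40 * c 5 - 20 * c 1 * c 2^2 - 20 * c 1^2 * c 3 + 3 * c 1^5"
    using sinh_rec[of 4] K0 K1 K2 K3 K4 Q1 Q2 Q3 Q4 by (simp add: sum_simps; algebra)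
qed

lemma taylor_coeff_starlike_recursion:
  assumes f: "f holomorphic_on S" and q: "q holomorphic_on S" and S: "open S" "0 \<in> S"
    and eq: "\<And>z. z \<in> S \<Longrightarrow> z * deriv f z = f z * (1 + q z)"
  shows "of_nat n * taylor_coeff f n
    = taylor_coeff f n + (\<Sum>i=0..n. taylor_coeff f i * taylor_coeff q (n - i))"
proof -
  have "of_nat n * taylor_coeff f n = taylor_coeff (\<lambda>z. z * deriv f z) n"
    by (rule taylor_coeff_ident_mult_deriv[OF f S, symmetric])
  also have "\<dots> = taylor_coeff (\<lambda>z. f z + f z * q z) n"
    by (rule taylor_coeff_cong[OF S]) (simp add: eq algebra_simps)
  also have "\<dots> = taylor_coeff f n + (\<Sum>i=0..n. taylor_coeff f i * taylor_coeff q (n - i))"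
    using f q S by (simp add: taylor_coeff_add taylor_coeff_mult holomorphic_intros)
  finally show ?thesis .
qed

lemma norm_higher_deriv_0_le_fact:
  assumes hol: "h holomorphic_on ball 0 1" and bd: "\<And>z. z \<in> ball 0 1 \<Longrightarrow> norm (h z) \<le> 1"
  shows "norm ((deriv ^^ n) h 0) \<le> fact n"
proof -
  have Cauchy: "norm ((deriv ^^ n) h 0) \<le> fact n / r^n" if r: "0 < r" "r < 1" for r
  proof -
    have hr: "h holomorphic_on cball 0 r"
      using r by (intro holomorphic_on_subset[OF hol]) auto
    show ?thesis
      using Cauchy_inequality[of h 0 r 1 n] holomorphic_on_subset[OF hr ball_subset_cball]
        holomorphic_on_imp_continuous_on[OF hr] r bd by auto
  qed
  have lim: "((\<lambda>r::real. fact n / r^n) \<longlongrightarrow> fact n / 1^n) (at_left 1)"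
    by (intro tendsto_intros) auto
  have ev: "eventually (\<lambda>r. norm ((deriv ^^ n) h 0) \<le> fact n / r^n) (at_left (1::real))"
    using eventually_at_left_real[of 0 "1::real"] Cauchy by (auto elim!: eventually_mono)
  show ?thesis
    using tendsto_le[OF _ lim tendsto_const ev] by simp
qed

lemma norm_taylor_coeff_le_1:
  assumes "h holomorphic_on ball 0 1" and "\<And>z. z \<in> ball 0 1 \<Longrightarrow> norm (h z) \<le> 1"
  shows "norm (taylor_coeff h n) \<le> 1"
  using norm_higher_deriv_0_le_fact[OF assms, of n]
  by (simp add: taylor_coeff_def norm_divide divide_le_eq)

lemma has_field_derivative_Moebius_comp_at_0:
  assumes dp: "(\<phi> has_field_derivative d) (at 0)" and c: "\<phi> 0 = c" and nz: "1 - cnj c * c \<noteq> 0"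
  shows "((\<lambda>z. (\<phi> z - c) / (1 - cnj c * \<phi> z)) has_field_derivative d / (1 - cnj c * c)) (at 0)"
  by (rule derivative_eq_intros dp refl | use nz in \<open>simp add: c\<close>)+

text \<open>If \<open>|\<phi>|\<close> attains the value 1 then \<open>\<phi>\<close> is constant by the maximum
  modulus principle; otherwise \<open>\<phi>\<close> followed by the disc automorphism moving \<open>\<phi> 0\<close> to \<open>0\<close> is again
  bounded by 1, and the Cauchy estimate for its derivative at \<open>0\<close> is the claim.\<close>

lemma norm_deriv_0_le_1_minus_norm_sq:
  assumes hol: "\<phi> holomorphic_on ball 0 1" and bd: "\<And>z. z \<in> ball 0 1 \<Longrightarrow> norm (\<phi> z) \<le> 1"
  shows "norm (deriv \<phi> 0) \<le> 1 - norm (\<phi> 0)^2"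
proof (cases "\<exists>z\<in>ball 0 1. norm (\<phi> z) = 1")
  case True
  then obtain z where "z \<in> ball 0 1" "\<And>u. u \<in> ball 0 1 \<Longrightarrow> norm (\<phi> u) \<le> norm (\<phi> z)"
    using bd by auto
  then have "\<phi> constant_on ball 0 1"
    using maximum_modulus_principle[OF hol open_ball connected_ball open_ball order_refl] by blast
  then obtain y where "\<And>z. z \<in> ball 0 1 \<Longrightarrow> \<phi> z = y"
    by (auto simp: constant_on_def)
  then have "taylor_coeff \<phi> 1 = taylor_coeff (\<lambda>_. y) 1"
    by (intro taylor_coeff_cong[of "ball 0 1"]) auto
  then have "deriv \<phi> 0 = 0" by simp
  then show ?thesis using bd[of 0] by (simp add: abs_square_le_1)
next
  case False
  define c where "c = \<phi> 0"
  have lt1: "norm (\<phi> z) < 1" if "z \<in> ball 0 1" for z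
    using bd[OF that] False that by force
  then have c: "norm c < 1" by (simp add: c_def)
  define g where "g = Moebius_function 0 c \<circ> \<phi>"
  have "g holomorphic_on ball 0 1"
    unfolding g_def using lt1
    by (intro holomorphic_on_compose_gen[OF hol Moebius_function_holomorphic[OF c]]) auto
  moreover have "norm (g z) \<le> 1" if "z \<in> ball 0 1" for z
    using Moebius_function_norm_lt_1[OF c lt1[OF that], of 0] by (simp add: g_def)
  ultimately have g'_le: "norm ((deriv ^^ 1) g 0) \<le> fact 1"
    by (rule norm_higher_deriv_0_le_fact)
  have pos: "0 < 1 - norm c ^ 2" using c by (simp add: abs_square_less_1)
  have den: "1 - cnj c * c = of_real (1 - norm c ^ 2)"
    using complex_norm_square[of c] by (simp add: mult.commute)
  then have nz: "1 - cnj c * c \<noteq> 0"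
    using pos by (metis of_real_eq_0_iff less_irrefl)
  have d\<phi>: "(\<phi> has_field_derivative deriv \<phi> 0) (at 0)"
    using hol by (intro holomorphic_derivI) auto
  have "(g has_field_derivative deriv \<phi> 0 / (1 - cnj c * c)) (at 0)"
    unfolding g_def o_def Moebius_function_simple
    using d\<phi> c_def[symmetric] nz by (rule has_field_derivative_Moebius_comp_at_0)
  then have "deriv g 0 = deriv \<phi> 0 / of_real (1 - norm c ^ 2)"
    unfolding den by (rule DERIV_imp_deriv)
  then have "norm (deriv g 0) = norm (deriv \<phi> 0) / (1 - norm c ^ 2)"
    using pos by (simp only: norm_divide norm_of_real abs_of_pos)
  with g'_le have "norm (deriv \<phi> 0) / (1 - norm c ^ 2) \<le> 1"
    by simp
  with pos show ?thesis by (simp add: c_def divide_le_eq)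
qed

lemma schwarz_taylor_coeff_2_le:
  assumes hol: "w holomorphic_on ball 0 1" and maps: "w ` ball 0 1 \<subseteq> ball 0 1" and w0: "w 0 = 0"
  shows "norm (taylor_coeff w 2) \<le> 1 - norm (taylor_coeff w 1)^2"
proof -
  obtain \<phi> where hol\<phi>: "\<phi> holomorphic_on ball 0 1" and w: "\<And>z. norm z < 1 \<Longrightarrow> w z = z * \<phi> z"
     and d0: "deriv w 0 = \<phi> 0"
    using Schwarz3[OF hol w0] by blast
  have "norm (w z) < 1" if "norm z < 1" for z
    using maps that by (auto simp: image_subset_iff)
  note Schwarz = Schwarz_Lemma[OF hol w0 this]
  have "norm (\<phi> z) \<le> 1" if "z \<in> ball 0 1" for z
  proof (cases "z = 0")
    case True then show ?thesis using Schwarz(2)[of 0] d0 by simp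
  next
    case False
    then show ?thesis using Schwarz(1)[of z] w[of z] that by (simp add: norm_mult)
  qed
  moreover have "taylor_coeff w n = taylor_coeff (\<lambda>z. z * \<phi> z) n" for n
    by (rule taylor_coeff_cong[of "ball 0 1"]) (auto simp: w)
  then have "taylor_coeff w 1 = \<phi> 0" "taylor_coeff w 2 = deriv \<phi> 0"
    by (simp_all add: taylor_coeff_ident_mult[OF hol\<phi>] d0)
  ultimately show ?thesis
    using norm_deriv_0_le_1_minus_norm_sq[OF hol\<phi>] by simp
qed

text \<open>With \<open>f = z g\<close>, the function \<open>q = z g'/g\<close> is the holomorphic extension of \<open>z f'/f - 1\<close> to \<open>0\<close>.\<close>

lemma S_star_rho_arsinh_representation:
  assumes "f \<in> S_star_rho"
  obtains w q where "w holomorphic_on ball 0 1" "w ` ball 0 1 \<subseteq> ball 0 1" "w 0 = 0"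
    and "q holomorphic_on ball 0 1" "q 0 = 0" "\<And>z. z \<in> ball 0 1 \<Longrightarrow> w z = sinh (q z)"
    and "\<And>z. z \<in> ball 0 1 \<Longrightarrow> z * deriv f z = f z * (1 + q z)"
proof -
  have holf: "f holomorphic_on ball 0 1" and inj: "inj_on f (ball 0 1)" and f0: "f 0 = 0"
    and df0: "deriv f 0 = 1"
    and sub: "subordinate (\<lambda>z. if z = 0 then 1 else z * deriv f z / f z) (\<lambda>z. 1 + arsinh z)"
    using assms by (auto simp: S_star_rho_def)
  obtain w where holw: "w holomorphic_on ball 0 1" and mapw: "w ` ball 0 1 \<subseteq> ball 0 1"
    and w0: "w 0 = 0"
    and weq: "\<And>z. z \<in> ball 0 1 \<Longrightarrow> (if z = 0 then 1 else z * deriv f z / f z) = 1 + arsinh (w z)"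
    using sub unfolding subordinate_def by blast
  obtain g where holg: "g holomorphic_on ball 0 1" and fg: "\<And>z. norm z < 1 \<Longrightarrow> f z = z * g z"
    and g0: "deriv f 0 = g 0"
    using Schwarz3[OF holf f0] by blast
  have gnz: "g z \<noteq> 0" if z: "z \<in> ball 0 1" for z
  proof (cases "z = 0")
    case True then show ?thesis using g0 df0 by simp
  next
    case False
    then have "f z \<noteq> f 0" using inj z by (auto dest: inj_onD)
    then show ?thesis using fg[of z] z f0 by auto
  qed
  define q where "q z = z * deriv g z / g z" for z
  have holq: "q holomorphic_on ball 0 1"
    unfolding q_def using gnz by (intro holomorphic_intros holomorphic_deriv holg) auto
  have eq: "z * deriv f z = f z * (1 + q z)" if z: "z \<in> ball 0 1" for z
  proof -
    have "(g has_field_derivative deriv g z) (at z)"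
      using holg z by (intro holomorphic_derivI) auto
    then have "((\<lambda>z. z * g z) has_field_derivative g z + z * deriv g z) (at z)"
      by (auto intro!: derivative_eq_intros)
    then have "(f has_field_derivative g z + z * deriv g z) (at z)"
      by (rule has_field_derivative_transform_within_open[of _ _ _ "ball 0 1"]) (use z fg in auto)
    then have "deriv f z = g z + z * deriv g z"
      by (rule DERIV_imp_deriv)
    then show ?thesis
      using fg[of z] gnz[OF z] z by (simp add: q_def field_simps)
  qed
  have "w z = sinh (q z)" if z: "z \<in> ball 0 1" for z
  proof (cases "z = 0")
    case True then show ?thesis using w0 by (simp add: q_def)
  next
    case False
    then have "f z \<noteq> 0" using fg[of z] gnz[OF z] z by simp
    with eq[OF z] have "z * deriv f z / f z = 1 + q z" by (simp add: field_simps)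
    with weq[OF z] False have "q z = arsinh (w z)" by simp
    then show ?thesis by (simp add: sinh_arsinh_complex)
  qed
  with holw mapw w0 holq eq show thesis
    by (intro that[of w q]) (auto simp: q_def)
qed

lemma taylor_coeffs_of_arsinh_subordinate:
  assumes f: "f holomorphic_on S" and q: "q holomorphic_on S" and S: "open S" "0 \<in> S"
    and f0: "f 0 = 0" and df0: "deriv f 0 = 1" and q0: "q 0 = 0"
    and w: "\<And>z. z \<in> S \<Longrightarrow> w z = sinh (q z)"
    and eq: "\<And>z. z \<in> S \<Longrightarrow> z * deriv f z = f z * (1 + q z)"
  defines "a \<equiv> taylor_coeff f" and "c \<equiv> taylor_coeff w"
  shows "a 2 = c 1" "2 * a 3 = c 2 + c 1^2" "18 * a 4 = 6 * c 3 + 9 * c 1 * c 2 + 2 * c 1^3"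
    and "72 * a 5 = 18 * c 4 + 9 * c 2^2 + 24 * c 1 * c 3 + 9 * c 1^2 * c 2 - c 1^4"
    and "1800 * a 6 = 360 * c 5 + 300 * c 2 * c 3 + 450 * c 1 * c 4 + 45 * c 1 * c 2^2
      + 120 * c 1^2 * c 3 - 125 * c 1^3 * c 2 - 8 * c 1^5"
proof -
  define Q where "Q = taylor_coeff q"
  have "c = taylor_coeff (\<lambda>z. sinh (q z))"
    unfolding c_def by (intro ext taylor_coeff_cong[OF S]) (simp add: w)
  note Q = taylor_coeff_from_sinh_comp[OF q S q0, folded this Q_def]
  have coeff_rec: "of_nat n * a n = a n + (\<Sum>i=0..n. a i * Q (n - i))" for n
    unfolding a_def Q_def by (rule taylor_coeff_starlike_recursion[OF f q S eq])
  note sum_simps = atLeast0_atMost_Suc eval_nat_numeral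
  have a0: "a 0 = 0" and a1: "a 1 = 1" and Q0: "Q 0 = 0"
    using f0 df0 q0 by (simp_all add: a_def Q_def)
  show A2: "a 2 = c 1" using coeff_rec[of 2] a0 a1 Q0 Q(1) by (simp add: sum_simps)
  show A3: "2 * a 3 = c 2 + c 1^2"
    using coeff_rec[of 3] a0 a1 Q0 Q(1,2) A2 by (simp add: sum_simps; algebra)
  show A4: "18 * a 4 = 6 * c 3 + 9 * c 1 * c 2 + 2 * c 1^3"
    using coeff_rec[of 4] a0 a1 Q0 Q(1-3) A2 A3 by (simp add: sum_simps; algebra)
  show A5: "72 * a 5 = 18 * c 4 + 9 * c 2^2 + 24 * c 1 * c 3 + 9 * c 1^2 * c 2 - c 1^4"
    using coeff_rec[of 5] a0 a1 Q0 Q(1-4) A2 A3 A4 by (simp add: sum_simps; algebra)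
  show "1800 * a 6 = 360 * c 5 + 300 * c 2 * c 3 + 450 * c 1 * c 4 + 45 * c 1 * c 2^2
      + 120 * c 1^2 * c 3 - 125 * c 1^3 * c 2 - 8 * c 1^5"
    using coeff_rec[of 6] a0 a1 Q0 Q A2 A3 A4 A5 by (simp add: sum_simps; algebra)
qed

definition Omega2_schwarz_poly :: "complex \<Rightarrow> complex \<Rightarrow> complex \<Rightarrow> complex \<Rightarrow> complex \<Rightarrow> complex" where
  "Omega2_schwarz_poly c1 c2 c3 c4 c5 =
    - (1/16) * c4^2 + (1/15) * c3 * c5 + (1/64) * c2^4 - (7/60) * c1 * c2^2 * c3 - (1/30) * c1^2 * c3^2
    + (3/16) * c1^2 * c2 * c4 - (7/90) * c1^3 * c5 - (103/2880) * c1^4 * c2^2 + (109/1800) * c1^5 * c3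
    - (139/14400) * c1^8"

lemma Omega2_eq_schwarz_poly:
  fixes a c :: "nat \<Rightarrow> complex"
  assumes "a 2 = c 1" "2 * a 3 = c 2 + c 1^2" "18 * a 4 = 6 * c 3 + 9 * c 1 * c 2 + 2 * c 1^3"
    and "72 * a 5 = 18 * c 4 + 9 * c 2^2 + 24 * c 1 * c 3 + 9 * c 1^2 * c 2 - c 1^4"
    and "1800 * a 6 = 360 * c 5 + 300 * c 2 * c 3 + 450 * c 1 * c 4 + 45 * c 1 * c 2^2
      + 120 * c 1^2 * c 3 - 125 * c 1^3 * c 2 - 8 * c 1^5"
  shows "(a 4 * a 6 - (a 5)^2) - a 2 * (a 3 * a 6 - a 4 * a 5) + a 3 * (a 3 * a 5 - (a 4)^2)
    = Omega2_schwarz_poly (c 1) (c 2) (c 3) (c 4) (c 5)"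
proof -
  have "129600 * ((a 4 * a 6 - (a 5)^2) - a 2 * (a 3 * a 6 - a 4 * a 5) + a 3 * (a 3 * a 5 - (a 4)^2))
     = 4 * (18 * a 4) * (1800 * a 6) - 25 * (72 * a 5)^2 - 36 * a 2 * (2 * a 3) * (1800 * a 6)
       + 100 * a 2 * (18 * a 4) * (72 * a 5) + 450 * (2 * a 3)^2 * (72 * a 5) - 200 * (2 * a 3) * (18 * a 4)^2"
    by algebra
  also have "\<dots> = 129600 * Omega2_schwarz_poly (c 1) (c 2) (c 3) (c 4) (c 5)"
    unfolding assms Omega2_schwarz_poly_def by algebra
  finally show ?thesis by (simp only: mult_cancel_left) simp
qed

text \<open>In the variable \<open>y = 1 - x\<close> the difference of the two sides has only positive coefficients.\<close>

lemma Omega2_majorant_le: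
  fixes x :: real
  assumes "0 \<le> x" "x \<le> 1"
  shows "1/16 + 1/15 + 1/64 * (1 - x^2)^4 + 7/60 * x * (1 - x^2)^2 + 1/30 * x^2 + 3/16 * x^2 * (1 - x^2)
     + 7/90 * x^3 + 103/2880 * x^4 * (1 - x^2)^2 + 109/1800 * x^5 + 139/14400 * x^8 \<le> 1/3"
proof -
  define y where "y = 1 - x"
  have "1/3 - (1/16 + 1/15 + 1/64 * (1 - x^2)^4 + 7/60 * x * (1 - x^2)^2 + 1/30 * x^2
     + 3/16 * x^2 * (1 - x^2) + 7/90 * x^3 + 103/2880 * x^4 * (1 - x^2)^2 + 109/1800 * x^5
     + 139/14400 * x^8)
     = 181/960 * y^8 + 167/120 * x * y^7 + 1033/240 * x^2 * y^6 + 2633/360 * x^3 * y^5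
       + 21817/2880 * x^4 * y^4 + 17707/3600 * x^5 * y^3 + 49/25 * x^6 * y^2 + 439/900 * x^7 * y
       + 329/14400 * x^8"
    unfolding y_def by algebra
  moreover have "0 \<le> 181/960 * y^8 + 167/120 * x * y^7 + 1033/240 * x^2 * y^6 + 2633/360 * x^3 * y^5
       + 21817/2880 * x^4 * y^4 + 17707/3600 * x^5 * y^3 + 49/25 * x^6 * y^2 + 439/900 * x^7 * y
       + 329/14400 * x^8"
    using assms by (intro add_nonneg_nonneg mult_nonneg_nonneg zero_le_power) (auto simp: y_def)
  ultimately show ?thesis by linarith
qed

lemma norm_Omega2_schwarz_poly_le:
  assumes c1: "norm c1 \<le> 1" and c2: "norm c2 \<le> 1 - norm c1^2"
    and c3: "norm c3 \<le> 1" and c4: "norm c4 \<le> 1" and c5: "norm c5 \<le> 1"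
  shows "norm (Omega2_schwarz_poly c1 c2 c3 c4 c5) \<le> 1/3"
proof -
  define x where "x = norm c1"
  define b where "b = 1 - x^2"
  have x: "0 \<le> x" "x \<le> 1" using c1 by (auto simp: x_def)
  have b: "0 \<le> b" "norm c2 \<le> b" using x c2 by (auto simp: x_def b_def power_le_one)
  have b2: "norm c2 ^ 2 \<le> b^2" using b by (simp add: power_mono)
  have diff_mono: "norm (u - v) \<le> r + s" if "norm u \<le> r" "norm v \<le> s" for u v :: complex and r s
    using norm_triangle_ineq4[of u v] that by linarith
  have "norm (- (1/16) * c4^2) \<le> 1/16"
    using c4 by (simp add: norm_mult norm_power power_le_one)
  moreover have "norm ((1/15) * c3 * c5) \<le> 1/15"
    using c3 c5 by (simp add: norm_mult mult_le_one)
  moreover have "norm ((1/64) * c2^4) \<le> 1/64 * b^4"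
    using b by (simp add: norm_mult norm_power power_mono)
  moreover have "norm ((7/60) * c1 * c2^2 * c3) \<le> 7/60 * x * b^2"
    using mult_left_mono[OF mult_mono[OF b2 c3] norm_ge_zero[of c1]]
    by (simp add: norm_mult norm_power x_def ac_simps)
  moreover have "norm ((1/30) * c1^2 * c3^2) \<le> 1/30 * x^2"
    using c3 by (simp add: norm_mult norm_power x_def mult_left_le power_le_one)
  moreover have "norm ((3/16) * c1^2 * c2 * c4) \<le> 3/16 * x^2 * b"
    using mult_left_mono[OF mult_mono[OF b(2) c4 b(1) norm_ge_zero] zero_le_power2[of "norm c1"]]
    by (simp add: norm_mult norm_power x_def ac_simps)
  moreover have "norm ((7/90) * c1^3 * c5) \<le> 7/90 * x^3"
    using mult_left_le_one_le[of "norm c1 ^ 3" "norm c5"] c5 by (simp add: norm_mult norm_power x_def)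
  moreover have "norm ((103/2880) * c1^4 * c2^2) \<le> 103/2880 * x^4 * b^2"
    using mult_left_mono[OF b2, of "norm c1 ^ 4"] by (simp add: norm_mult norm_power x_def ac_simps)
  moreover have "norm ((109/1800) * c1^5 * c3) \<le> 109/1800 * x^5"
    using mult_left_le_one_le[of "norm c1 ^ 5" "norm c3"] c3 by (simp add: norm_mult norm_power x_def)
  moreover have "norm ((139/14400) * c1^8) \<le> 139/14400 * x^8"
    by (simp add: norm_mult norm_power x_def)
  ultimately have "norm (Omega2_schwarz_poly c1 c2 c3 c4 c5)
    \<le> 1/16 + 1/15 + 1/64 * b^4 + 7/60 * x * b^2 + 1/30 * x^2 + 3/16 * x^2 * b
     + 7/90 * x^3 + 103/2880 * x^4 * b^2 + 109/1800 * x^5 + 139/14400 * x^8"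
    unfolding Omega2_schwarz_poly_def by (intro norm_triangle_mono diff_mono)
  also have "\<dots> \<le> 1/3"
    unfolding b_def by (rule Omega2_majorant_le[OF x])
  finally show ?thesis .
qed

theorem mainTheorem7:
  fixes f :: "complex \<Rightarrow> complex"
  assumes "f \<in> S_star_rho"
  defines "a \<equiv> taylor_coeff f"
  shows "cmod ((a 4 * a 6 - (a 5)^2) - a 2 * (a 3 * a 6 - a 4 * a 5) + a 3 * (a 3 * a 5 - (a 4)^2))
    \<le> (1136896 + 716800 * sqrt (3/157) + 81920 * sqrt (3/67) + 212736 * sqrt (2/35)
        + 74240 * sqrt (21/307) + 10240 * sqrt (6/23)) / 3686400"
proof -
  obtain w q where w: "w holomorphic_on ball 0 1" "w ` ball 0 1 \<subseteq> ball 0 1" "w 0 = 0"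
    and q: "q holomorphic_on ball 0 1" "q 0 = 0" "\<And>z. z \<in> ball 0 1 \<Longrightarrow> w z = sinh (q z)"
    and eq: "\<And>z. z \<in> ball 0 1 \<Longrightarrow> z * deriv f z = f z * (1 + q z)"
    using S_star_rho_arsinh_representation[OF assms(1)] by blast
  have f: "f holomorphic_on ball 0 1" "f 0 = 0" "deriv f 0 = 1"
    using assms(1) by (auto simp: S_star_rho_def)
  define c where "c = taylor_coeff w"
  note coeffs = taylor_coeffs_of_arsinh_subordinate[OF f(1) q(1) open_ball _ f(2,3) q(2,3) eq,
      folded a_def c_def]
  have "norm (w z) \<le> 1" if "z \<in> ball 0 1" for z
    using w(2) that by (auto simp: image_subset_iff less_imp_le)
  then have c_le_1: "norm (c n) \<le> 1" for n
    unfolding c_def by (rule norm_taylor_coeff_le_1[OF w(1)])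
  have c2_le: "norm (c 2) \<le> 1 - norm (c 1)^2"
    unfolding c_def by (rule schwarz_taylor_coeff_2_le[OF w])
  have "cmod ((a 4 * a 6 - (a 5)^2) - a 2 * (a 3 * a 6 - a 4 * a 5) + a 3 * (a 3 * a 5 - (a 4)^2))
      = cmod (Omega2_schwarz_poly (c 1) (c 2) (c 3) (c 4) (c 5))"
    using Omega2_eq_schwarz_poly[OF coeffs] by simp
  also have "\<dots> \<le> 1/3"
    by (rule norm_Omega2_schwarz_poly_le[OF c_le_1 c2_le c_le_1 c_le_1 c_le_1])
  also have "\<dots> \<le> (1136896 + 716800 * sqrt (3/157) + 81920 * sqrt (3/67) + 212736 * sqrt (2/35)
        + 74240 * sqrt (21/307) + 10240 * sqrt (6/23)) / 3686400"
  proof -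
    have "13/100 \<le> sqrt (3/157::real)" by (rule real_le_rsqrt) (simp add: power2_eq_square)
    then have "3686400/3 \<le> 1136896 + 716800 * sqrt (3/157) + 81920 * sqrt (3/67)
        + 212736 * sqrt (2/35) + 74240 * sqrt (21/307) + 10240 * sqrt (6/23::real)"
      using real_sqrt_ge_zero[of "3/67"] real_sqrt_ge_zero[of "2/35"] real_sqrt_ge_zero[of "21/307"]
        real_sqrt_ge_zero[of "6/23"] by linarith
    then show ?thesis by (simp add: le_divide_eq)
  qed
  finally show ?thesis .
qed

end
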